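(* Let $p$ be an odd prime, $n=2k$, and $\mathcal{S}=\{y\in\mathbb{F}_{p^n}: T^n_k(y)=0\}$. Let $L(x)=\sum_{j=0}^{n-1}c_jx^{p^j}$ with all $c_j\in\mathbb{F}_{p^k}$ be a linearized polynomial that permutes $\mathbb{F}_{p^n}$, let $\delta\in\mathbb{F}_{p^n}$ be arbitrary, let $t$ be a nonnegative integer and $s=t(p^k+1)$. Then the mapping $$G(x)=-L(x)+(x+\delta)^s-(x+\delta)^{p^ks}$$ permutes $\mathcal{S}$, and consequently $$F(x)=L(x)+(x^{p^k}-x+\delta)^{t(p^k+1)}$$ is a permutation of $\mathbb{F}_{p^n}$.
   Context: $T^n_k(\beta)=\beta+\beta^{p^k}$ for $n=2k$ is the relative trace from $\mathbb{F}_{p^n}$ to $\mathbb{F}_{p^k}$. The convention $y^0=1$ is used. *)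

theory Defs
  imports "HOL-Computational_Algebra.Primes"
begin

definition rel_trace :: "nat \<Rightarrow> nat \<Rightarrow> 'a::field \<Rightarrow> 'a" where
  "rel_trace p k \<beta> = \<beta> + \<beta> ^ (p ^ k)"

definition subfield_pk :: "nat \<Rightarrow> nat \<Rightarrow> 'a::field set" where
  "subfield_pk p k = {y. y ^ (p ^ k) = y}"

end

theory Submission
  imports Defs HOL.Modules
begin

text \<open>
  Write \<open>q = p^k\<close> and \<open>\<phi> x = x^q\<close>, an additive involution of \<open>GF(p^n)\<close> because
  \<open>q\<^sup>2 = p^n\<close>. Since the coefficients of \<open>L\<close> lie in \<open>GF(q)\<close>, \<open>L\<close> commutes with \<open>\<phi>\<close>, and
  every \<open>s\<close>-th power with \<open>s = t(q + 1)\<close> is fixed by \<open>\<phi>\<close>. Hence the two power terms of \<open>G\<close>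
  cancel, \<open>G = -L\<close>, and \<open>-L\<close> maps the kernel \<open>\<S>\<close> of \<open>x + \<phi> x\<close> injectively into itself.
  For \<open>F\<close> one computes \<open>\<phi>(F x) - F x = L(\<phi> x - x)\<close>, so \<open>F x = F y\<close> forces
  \<open>\<phi> x - x = \<phi> y - y\<close>, then \<open>L x = L y\<close> and \<open>x = y\<close>.
\<close>

text \<open>The library's \<open>finite_field_power_card_eq_same\<close> is stated for the class \<open>finite_field\<close>,
  which the sort \<open>{field,finite}\<close> does not provide.\<close>

lemma finite_field_power_card:
  fixes x :: "'a::{field,finite}"
  shows "x ^ card (UNIV :: 'a set) = x"
proof (cases "x = 0")
  case True
  then show ?thesis
    using finite_UNIV_card_ge_0[where ?'a = 'a] by simp
next
  case False
  define U where "U = UNIV - {0 :: 'a}"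
  have "finite U" "card U = card (UNIV :: 'a set) - 1"
    by (simp_all add: U_def card_Diff_singleton)
  have "(\<Prod>y\<in>U. x * y) = \<Prod>U"
    using False by (intro prod.reindex_bij_witness[of _ "\<lambda>y. y / x" "\<lambda>y. x * y"])
      (auto simp: U_def)
  moreover have "(\<Prod>y\<in>U. x * y) = x ^ card U * \<Prod>U"
    by (simp add: prod.distrib)
  moreover have "\<Prod>U \<noteq> 0"
    using \<open>finite U\<close> by (simp add: U_def)
  ultimately have "x ^ card U = 1"
    by simp
  then have "x * x ^ (card (UNIV :: 'a set) - 1) = x"
    using \<open>card U = _\<close> by simp
  then show ?thesis
    using finite_UNIV_card_ge_0[where ?'a = 'a] by (simp flip: power_Suc)
qed

lemma additive_frobenius_power:
  assumes "prime CHAR('a::comm_ring_1)"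
  shows "additive (\<lambda>x::'a. x ^ CHAR('a) ^ j)"
  by unfold_locales (rule freshmans_dream'[OF assms refl])

lemma additive_linearized:
  assumes "prime CHAR('a::comm_ring_1)"
  shows "additive (\<lambda>x::'a. \<Sum>j<n. c j * x ^ CHAR('a) ^ j)"
  by unfold_locales
    (simp add: additive.add[OF additive_frobenius_power[OF assms]] distrib_left sum.distrib)

lemma linearized_power_commute:
  fixes c :: "nat \<Rightarrow> 'a::comm_ring_1"
  assumes "prime CHAR('a)" and "q = CHAR('a) ^ m" and "\<forall>j<n. c j ^ q = c j"
  shows "(\<Sum>j<n. c j * x ^ CHAR('a) ^ j) ^ q = (\<Sum>j<n. c j * (x ^ q) ^ CHAR('a) ^ j)"
proof -
  have "(\<Sum>j<n. c j * x ^ CHAR('a) ^ j) ^ q = (\<Sum>j<n. (c j * x ^ CHAR('a) ^ j) ^ q)"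
    by (rule freshmans_dream_sum'[OF assms(1,2)])
  also have "\<dots> = (\<Sum>j<n. c j * (x ^ q) ^ CHAR('a) ^ j)"
    using assms(3) by (intro sum.cong) (simp_all add: power_mult_distrib flip: power_mult,
        simp add: mult.commute)
  finally show ?thesis .
qed

lemma power_norm_exponent_fixed:
  fixes z :: "'a::monoid_mult"
  assumes "z ^ (q * q) = z"
  shows "(z ^ (t * (q + 1))) ^ q = z ^ (t * (q + 1))"
proof -
  have "(z ^ (t * (q + 1))) ^ q = z ^ (q * q * t + t * q)"
    by (simp add: algebra_simps flip: power_mult)
  also have "\<dots> = (z ^ (q * q)) ^ t * z ^ (t * q)"
    by (simp only: power_add power_mult)
  also have "\<dots> = z ^ (t + t * q)"
    by (simp only: assms power_add)
  finally show ?thesis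
    by (simp add: algebra_simps)
qed

lemma bij_betw_neg_trace_kernel:
  fixes L \<phi> :: "'a::ab_group_add \<Rightarrow> 'a"
  assumes "additive L" and "additive \<phi>" and "inj L"
    and "finite {y. y + \<phi> y = 0}" and "\<And>x. \<phi> (L x) = L (\<phi> x)"
  shows "bij_betw (\<lambda>x. - L x) {y. y + \<phi> y = 0} {y. y + \<phi> y = 0}"
proof -
  let ?K = "{y. y + \<phi> y = 0}"
  have "- L x + \<phi> (- L x) = - L (x + \<phi> x)" for x
    using assms(5) by (simp add: additive.add[OF assms(1)] additive.minus[OF assms(2)])
  then have maps: "(\<lambda>x. - L x) ` ?K \<subseteq> ?K"
    by (auto simp: additive.zero[OF assms(1)])
  have "inj_on (\<lambda>x. - L x) ?K"
    using assms(3) by (auto simp: inj_on_def)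
  then show ?thesis
    using endo_inj_surj[OF assms(4) maps] by (simp add: bij_betw_def)
qed

lemma inj_additive_plus_invariant:
  fixes L \<phi> h :: "'a::ab_group_add \<Rightarrow> 'a"
  assumes "additive L" and "additive \<phi>" and "inj L"
    and "\<And>x. \<phi> (L x) = L (\<phi> x)" and "\<And>w. \<phi> (h w) = h w"
  shows "inj (\<lambda>x. L x + h (\<phi> x - x))"
proof (rule injI)
  let ?F = "\<lambda>x. L x + h (\<phi> x - x)"
  have frob_diff: "\<phi> (?F x) - ?F x = L (\<phi> x - x)" for x
    using assms(4,5) by (simp add: additive.add[OF assms(2)] additive.diff[OF assms(1)])
  fix x y
  assume "?F x = ?F y"
  then have "\<phi> x - x = \<phi> y - y"
    using frob_diff[of x] frob_diff[of y] assms(3) by (metis injD)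
  with \<open>?F x = ?F y\<close> have "L x = L y"
    by simp
  with assms(3) show "x = y"
    by (rule injD)
qed

theorem proposition7:
  fixes p n k t s :: nat
    and c :: "nat \<Rightarrow> 'a::{field,finite}"
    and L :: "'a \<Rightarrow> 'a"
    and \<delta> :: 'a
  assumes "prime p" and "odd p"
    and "CHAR('a) = p" and "card (UNIV :: 'a set) = p ^ n"
    and "n = 2 * k"
    and "\<forall>j<n. c j \<in> subfield_pk p k"
    and "L = (\<lambda>x. \<Sum>j<n. c j * x ^ (p ^ j))"
    and "bij L"
    and "s = t * (p ^ k + 1)"
  shows "bij_betw (\<lambda>x. - L x + (x + \<delta>) ^ s - (x + \<delta>) ^ (p ^ k * s))
           {y. rel_trace p k y = 0} {y. rel_trace p k y = 0}
         \<and> bij (\<lambda>x. L x + (x ^ (p ^ k) - x + \<delta>) ^ (t * (p ^ k + 1)))"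
proof -
  define \<phi> where "\<phi> = (\<lambda>x::'a. x ^ p ^ k)"
  have char: "prime CHAR('a)"
    using assms(1,3) by simp
  have frob: "additive \<phi>"
    using additive_frobenius_power[OF char] by (simp add: \<phi>_def assms(3))
  have lin: "additive L"
    using additive_linearized[OF char] by (simp add: assms(3,7))
  have commute: "\<phi> (L x) = L (\<phi> x)" for x
    using linearized_power_commute[OF char, of "p ^ k" k n c x] assms(3,6,7)
    by (simp add: \<phi>_def subfield_pk_def)
  have "z ^ (p ^ k * p ^ k) = z" for z :: 'a
    using finite_field_power_card[of z] by (simp add: assms(4,5) mult_2 flip: power_add)
  then have fixed: "\<phi> (z ^ s) = z ^ s" for z :: 'a
    using power_norm_exponent_fixed[of z "p ^ k" t] by (simp add: \<phi>_def assms(9))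
  have "bij_betw (\<lambda>x. - L x) {y. rel_trace p k y = 0} {y. rel_trace p k y = 0}"
    using bij_betw_neg_trace_kernel[OF lin frob bij_is_inj[OF assms(8)] _ commute]
    by (simp add: rel_trace_def \<phi>_def)
  moreover have "(x + \<delta>) ^ (p ^ k * s) = (x + \<delta>) ^ s" for x
    using fixed[of "x + \<delta>"] by (simp add: \<phi>_def power_mult mult.commute)
  moreover have "inj (\<lambda>x. L x + (\<phi> x - x + \<delta>) ^ s)"
    using inj_additive_plus_invariant[OF lin frob bij_is_inj[OF assms(8)] commute,
        of "\<lambda>w. (w + \<delta>) ^ s"] fixed by simp
  ultimately show ?thesis
    by (simp add: finite_UNIV_inj_surj bij_def \<phi>_def assms(9))
qed

end
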